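(* Let $p\in\{*,\le\omega\}$ and $L\subseteq\Sigma^p$ (where $\Sigma^{\le\omega}=\Sigma^*\cup\Sigma^\omega$). Then $\gamma_p(\alpha_p(L))\subseteq L(\mathfrak A)$ if and only if $L\subseteq L(\mathfrak A)$.
   Context: $\Sigma$ is a finite alphabet; concatenation $w\cdot u$ equals $wu$ if $w$ is finite and $w$ if $w$ is infinite, extended pointwise to languages. For $A\subseteq\Sigma^*$, $A^\omega$ is the set of all words $w_0w_1w_2\cdots$ with $w_i\in A$, and $CD^\omega$ means $C\cdot D^\omega$. Fix an extended Büchi automaton $\mathfrak A=(Q,\Sigma,\delta,q_0,F)$ (finite states, $\delta:Q\times\Sigma\to\mathcal P(Q)$, initial $q_0$, final $F$). Its language $L(\mathfrak A)\subseteq\Sigma^{\le\omega}$ consists of all finite words along which some path from $q_0$ reaches a final state, together with all infinite words having a run from $q_0$ visiting final states infinitely often. For $w\in\Sigma^*$ write $p\overset{w}{\leadsto}q$ if $q$ is reachable from $p$ reading $w$, and $p\overset{w}{\leadsto}_F q$ if there are $q''\in F$, $w=uv$ with $p\overset{u}{\leadsto}q''\overset{v}{\leadsto}q$. For $w,u\in\Sigma^+$, $w\sim u$ iff for all $p,q$: $p\overset{w}{\leadsto}q\Leftrightarrow p\overset{u}{\leadsto}q$ and $p\overset{w}{\leadsto}_Fq\Leftrightarrow p\overset{u}{\leadsto}_Fq$. $\mathcal Q=\Sigma^+/{\sim}\uplus\{[\epsilon]\}$ with $[\epsilon]=\{\epsilon\}$; concatenation of classes is well defined. Let $\mathcal C=\{(C,D)\mid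 C,D\in\mathcal Q,\ CD=C,\ DD=D\}$. Define $\mathfrak f(V)=\{(C,D)\in\mathcal C\mid CD^\omega\cap V\neq\emptyset\}$ and $\mathfrak g(\mathcal V)=\bigcup_{(C,D)\in\mathcal V}CD^\omega$; the closure is $\mathfrak c(\mathcal V)=\bigcup_{n\ge1}(\mathfrak f\circ\mathfrak g)^n(\mathcal V)$. $\mathcal M_{\le\omega}=\{\mathfrak c(\mathfrak f(V))\mid V\subseteq\Sigma^{\le\omega}\}$, $\mathcal M_*=\mathcal P(\mathcal Q)$. $\alpha_*(U)=\{C\in\mathcal Q\mid C\cap U\neq\emptyset\}$, $\alpha_{\le\omega}(V)=\mathfrak c(\mathfrak f(V))$, $\gamma_*(\mathcal U)=\bigcup_{C\in\mathcal U}C$, $\gamma_{\le\omega}(\mathcal V)=\mathfrak g(\mathcal V)$. *)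

theory Defs
  imports Main
begin

datatype 'a xword = Fin "'a list" | Inf "nat \<Rightarrow> 'a"

fun wconc :: "'a xword \<Rightarrow> 'a xword \<Rightarrow> 'a xword" where
  "wconc (Fin w) (Fin u) = Fin (w @ u)"
| "wconc (Fin w) (Inf u) = Inf (\<lambda>n. if n < length w then w ! n else u (n - length w))"
| "wconc (Inf w) u = Inf w"

text \<open>Infinite concatenation w0 w1 w2 ... of a sequence of finite words
  (a finite word if only finitely many factors are nonempty).\<close>
definition prefix_len :: "(nat \<Rightarrow> 'a list) \<Rightarrow> nat \<Rightarrow> nat" where
  "prefix_len ws k = sum_list (map (\<lambda>i. length (ws i)) [0..<k])"

definition infconcat :: "(nat \<Rightarrow> 'a list) \<Rightarrow> 'a xword" where
  "infconcat ws =
     (if \<exists>N. \<forall>i\<ge>N. ws i = []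
      then Fin (concat (map ws [0..<(LEAST N. \<forall>i\<ge>N. ws i = [])]))
      else Inf (\<lambda>n. let k = (LEAST k. n < prefix_len ws (Suc k))
                     in ws k ! (n - prefix_len ws k)))"

definition omega_pow :: "'a list set \<Rightarrow> 'a xword set" where
  "omega_pow A = {infconcat ws | ws. \<forall>i. ws i \<in> A}"

definition cdomega :: "'a list set \<Rightarrow> 'a list set \<Rightarrow> 'a xword set" where
  "cdomega C D = {wconc (Fin c) x | c x. c \<in> C \<and> x \<in> omega_pow D}"

fun reach :: "('q \<Rightarrow> 'a \<Rightarrow> 'q set) \<Rightarrow> 'q \<Rightarrow> 'a list \<Rightarrow> 'q \<Rightarrow> bool" where
  "reach \<delta> p [] q = (p = q)"
| "reach \<delta> p (a # w) q = (\<exists>p'\<in>\<delta> p a. reach \<delta> p' w q)"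

definition reachF :: "('q \<Rightarrow> 'a \<Rightarrow> 'q set) \<Rightarrow> 'q set \<Rightarrow> 'q \<Rightarrow> 'a list \<Rightarrow> 'q \<Rightarrow> bool" where
  "reachF \<delta> F p w q = (\<exists>q''\<in>F. \<exists>u v. w = u @ v \<and> reach \<delta> p u q'' \<and> reach \<delta> q'' v q)"

definition lang :: "('q \<Rightarrow> 'a \<Rightarrow> 'q set) \<Rightarrow> 'q \<Rightarrow> 'q set \<Rightarrow> 'a xword set" where
  "lang \<delta> q0 F =
     {Fin w | w. \<exists>q\<in>F. reach \<delta> q0 w q}
   \<union> {Inf w | w. \<exists>r. r 0 = q0 \<and> (\<forall>i. r (Suc i) \<in> \<delta> (r i) (w i)) \<and> (\<exists>\<^sub>\<infinity>i. r i \<in> F)}"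

definition aequiv :: "('q \<Rightarrow> 'a \<Rightarrow> 'q set) \<Rightarrow> 'q set \<Rightarrow> 'a list \<Rightarrow> 'a list \<Rightarrow> bool" where
  "aequiv \<delta> F w u = (\<forall>p q. (reach \<delta> p w q \<longleftrightarrow> reach \<delta> p u q) \<and> (reachF \<delta> F p w q \<longleftrightarrow> reachF \<delta> F p u q))"

definition cls :: "('q \<Rightarrow> 'a \<Rightarrow> 'q set) \<Rightarrow> 'q set \<Rightarrow> 'a list \<Rightarrow> 'a list set" where
  "cls \<delta> F w = (if w = [] then {[]} else {u. u \<noteq> [] \<and> aequiv \<delta> F w u})"

definition classes :: "('q \<Rightarrow> 'a \<Rightarrow> 'q set) \<Rightarrow> 'q set \<Rightarrow> 'a list set set" where
  "classes \<delta> F = range (cls \<delta> F)"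

definition cmult :: "('q \<Rightarrow> 'a \<Rightarrow> 'q set) \<Rightarrow> 'q set \<Rightarrow> 'a list set \<Rightarrow> 'a list set \<Rightarrow> 'a list set" where
  "cmult \<delta> F C D = cls \<delta> F ((SOME c. c \<in> C) @ (SOME d. d \<in> D))"

definition pairs :: "('q \<Rightarrow> 'a \<Rightarrow> 'q set) \<Rightarrow> 'q set \<Rightarrow> ('a list set \<times> 'a list set) set" where
  "pairs \<delta> F = {(C, D). C \<in> classes \<delta> F \<and> D \<in> classes \<delta> F
                      \<and> cmult \<delta> F C D = C \<and> cmult \<delta> F D D = D}"

definition ff :: "('q \<Rightarrow> 'a \<Rightarrow> 'q set) \<Rightarrow> 'q set \<Rightarrow> 'a xword set \<Rightarrow> ('a list set \<times> 'a list set) set" where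
  "ff \<delta> F V = {(C, D) \<in> pairs \<delta> F. cdomega C D \<inter> V \<noteq> {}}"

definition gg :: "('a list set \<times> 'a list set) set \<Rightarrow> 'a xword set" where
  "gg VV = (\<Union>(C, D)\<in>VV. cdomega C D)"

definition cl :: "('q \<Rightarrow> 'a \<Rightarrow> 'q set) \<Rightarrow> 'q set \<Rightarrow> ('a list set \<times> 'a list set) set \<Rightarrow> ('a list set \<times> 'a list set) set" where
  "cl \<delta> F VV = (\<Union>n\<in>{1..}. ((ff \<delta> F \<circ> gg) ^^ n) VV)"

definition alpha_star :: "('q \<Rightarrow> 'a \<Rightarrow> 'q set) \<Rightarrow> 'q set \<Rightarrow> 'a list set \<Rightarrow> 'a list set set" where
  "alpha_star \<delta> F U = {C \<in> classes \<delta> F. C \<inter> U \<noteq> {}}"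

definition gamma_star :: "'a list set set \<Rightarrow> 'a list set" where
  "gamma_star UU = \<Union>UU"

definition alpha_omega :: "('q \<Rightarrow> 'a \<Rightarrow> 'q set) \<Rightarrow> 'q set \<Rightarrow> 'a xword set \<Rightarrow> ('a list set \<times> 'a list set) set" where
  "alpha_omega \<delta> F V = cl \<delta> F (ff \<delta> F V)"

definition gamma_omega :: "('a list set \<times> 'a list set) set \<Rightarrow> 'a xword set" where
  "gamma_omega VV = gg VV"

end

theory Submission
  imports Defs "HOL-Library.Ramsey"
begin

text \<open>Both abstractions over-approximate: every finite word lies in its own class, and by
  Ramsey's theorem every infinite word \<open>w\<close> factors as \<open>c d\<^sub>0 d\<^sub>1 \<dots>\<close> with all \<open>d\<^sub>i\<close>,
  and all finite concatenations of consecutive ones, in one idempotent class \<open>D\<close>, so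
  \<open>w \<in> C D\<^sup>\<omega>\<close> for a linked pair \<open>(C, D)\<close>. Conversely the
  language of the automaton is saturated by \<open>\<sim>\<close>: the relation records both reachability and
  reachability through a final state, so an accepting run on \<open>c d\<^sub>0 d\<^sub>1 \<dots>\<close> can be cut at the
  factor boundaries and re-glued along \<open>c' d'\<^sub>0 d'\<^sub>1 \<dots>\<close> whenever \<open>c \<sim> c'\<close> and
  \<open>d\<^sub>i \<sim> d'\<^sub>i\<close>. Hence every \<open>C D\<^sup>\<omega>\<close> meeting the language is contained in it, and this is
  preserved by each round of the closure.\<close>

lemma reach_append: "reach \<delta> p (u @ v) q \<longleftrightarrow> (\<exists>m. reach \<delta> p u m \<and> reach \<delta> m v q)"
  by (induction u arbitrary: p) auto

lemma reachF_append:
  "reachF \<delta> F p (u @ v) q \<longleftrightarrow>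
     (\<exists>m. reachF \<delta> F p u m \<and> reach \<delta> m v q \<or> reach \<delta> p u m \<and> reachF \<delta> F m v q)"
proof
  assume "reachF \<delta> F p (u @ v) q"
  then obtain f x y where f: "f \<in> F" "u @ v = x @ y" "reach \<delta> p x f" "reach \<delta> f y q"
    unfolding reachF_def by blast
  then obtain z where "u = x @ z \<and> z @ v = y \<or> u @ z = x \<and> v = z @ y"
    by (meson append_eq_append_conv2)
  then show "\<exists>m. reachF \<delta> F p u m \<and> reach \<delta> m v q \<or> reach \<delta> p u m \<and> reachF \<delta> F m v q"
  proof
    assume "u = x @ z \<and> z @ v = y"
    moreover obtain m where "reach \<delta> f z m" "reach \<delta> m v q"
      using f(4) calculation reach_append by metis
    ultimately show ?thesis using f unfolding reachF_def by blast
  next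
    assume "u @ z = x \<and> v = z @ y"
    moreover obtain m where "reach \<delta> p u m" "reach \<delta> m z f"
      using f(3) calculation reach_append by metis
    ultimately show ?thesis using f unfolding reachF_def by blast
  qed
next
  assume "\<exists>m. reachF \<delta> F p u m \<and> reach \<delta> m v q \<or> reach \<delta> p u m \<and> reachF \<delta> F m v q"
  then obtain m where "reachF \<delta> F p u m \<and> reach \<delta> m v q \<or> reach \<delta> p u m \<and> reachF \<delta> F m v q"
    by blast
  then show "reachF \<delta> F p (u @ v) q"
  proof
    assume "reachF \<delta> F p u m \<and> reach \<delta> m v q"
    then obtain f x y where "f \<in> F" "u = x @ y" "reach \<delta> p x f" "reach \<delta> f y m" "reach \<delta> m v q"
      unfolding reachF_def by blast
    then show ?thesis unfolding reachF_def by (metis append.assoc reach_append)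
  next
    assume "reach \<delta> p u m \<and> reachF \<delta> F m v q"
    then obtain f x y where "f \<in> F" "v = x @ y" "reach \<delta> p u m" "reach \<delta> m x f" "reach \<delta> f y q"
      unfolding reachF_def by blast
    then show ?thesis unfolding reachF_def by (metis append.assoc reach_append)
  qed
qed

lemma aequiv_append: "aequiv \<delta> F u u' \<Longrightarrow> aequiv \<delta> F v v' \<Longrightarrow> aequiv \<delta> F (u @ v) (u' @ v')"
  by (simp add: aequiv_def reach_append reachF_append)

lemma cls_self [simp]: "w \<in> cls \<delta> F w"
  by (simp add: cls_def aequiv_def)

lemma cls_Nil: "cls \<delta> F [] = {[]}"
  by (simp add: cls_def)

lemma cls_in_classes [simp]: "cls \<delta> F w \<in> classes \<delta> F"
  by (simp add: classes_def)

lemma cls_eq_iff: "cls \<delta> F u = cls \<delta> F v \<longleftrightarrow> (u = []) = (v = []) \<and> aequiv \<delta> F u v"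
proof
  assume eq: "cls \<delta> F u = cls \<delta> F v"
  show "(u = []) = (v = []) \<and> aequiv \<delta> F u v"
  proof (cases "u = []")
    case True
    then show ?thesis using eq cls_self[of v \<delta> F] by (auto simp: cls_def aequiv_def)
  next
    case False
    then show ?thesis using eq cls_self[of u \<delta> F] by (auto simp: cls_def aequiv_def split: if_splits)
  qed
next
  assume "(u = []) = (v = []) \<and> aequiv \<delta> F u v"
  then show "cls \<delta> F u = cls \<delta> F v"
    by (auto simp: cls_def aequiv_def)
qed

lemma classes_eq_cls: "C \<in> classes \<delta> F \<Longrightarrow> c \<in> C \<Longrightarrow> cls \<delta> F c = C"
  by (auto simp: classes_def cls_def aequiv_def split: if_splits)

lemma cls_append_cong:
  "cls \<delta> F u = cls \<delta> F u' \<Longrightarrow> cls \<delta> F v = cls \<delta> F v' \<Longrightarrow> cls \<delta> F (u @ v) = cls \<delta> F (u' @ v')"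
  by (simp add: cls_eq_iff aequiv_append)

lemma cmult_cls:
  assumes "C \<in> classes \<delta> F" "D \<in> classes \<delta> F" "c \<in> C" "d \<in> D"
  shows "cmult \<delta> F C D = cls \<delta> F (c @ d)"
  unfolding cmult_def
  by (rule cls_append_cong) (metis assms classes_eq_cls someI)+

lemma classes_Nil_or_nonempty: "D \<in> classes \<delta> F \<Longrightarrow> D = {[]} \<or> [] \<notin> D"
  by (auto simp: classes_def cls_def)

lemma finite_classes:
  fixes \<delta> :: "'q::finite \<Rightarrow> 'a \<Rightarrow> 'q set"
  shows "finite (classes \<delta> F)"
proof -
  define key where "key w = (w = [], \<lambda>p q. reach \<delta> p w q, \<lambda>p q. reachF \<delta> F p w q)" for w :: "'a list"
  define rep where "rep k = cls \<delta> F (SOME w. key w = k)" for k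
  have "cls \<delta> F w = rep (key w)" for w
    unfolding rep_def using someI[of "\<lambda>w'. key w' = key w" w]
    by (simp add: key_def cls_eq_iff aequiv_def fun_eq_iff)
  then have "classes \<delta> F \<subseteq> range rep"
    by (auto simp: classes_def)
  then show ?thesis
    by (rule finite_subset) simp
qed

lemma classes_aequiv:
  assumes "C \<in> classes \<delta> F" "u \<in> C" "v \<in> C"
  shows "aequiv \<delta> F u v"
proof -
  have "cls \<delta> F u = cls \<delta> F v"
    using classes_eq_cls[OF assms(1)] assms(2,3) by simp
  then show ?thesis
    by (simp add: cls_eq_iff)
qed

lemma lang_Fin_aequiv: "aequiv \<delta> F u v \<Longrightarrow> Fin u \<in> lang \<delta> q0 F \<Longrightarrow> Fin v \<in> lang \<delta> q0 F"
  unfolding lang_def aequiv_def by blast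

lemma subset_gamma_alpha_star: "L \<subseteq> gamma_star (alpha_star \<delta> F L)"
proof
  fix w assume "w \<in> L"
  then have "cls \<delta> F w \<in> alpha_star \<delta> F L"
    by (auto simp: alpha_star_def intro: cls_self)
  then show "w \<in> gamma_star (alpha_star \<delta> F L)"
    unfolding gamma_star_def using cls_self by blast
qed

lemma gamma_alpha_star_subset_lang:
  assumes "L \<subseteq> {w. Fin w \<in> lang \<delta> q0 F}"
  shows "gamma_star (alpha_star \<delta> F L) \<subseteq> {w. Fin w \<in> lang \<delta> q0 F}"
proof
  fix u assume "u \<in> gamma_star (alpha_star \<delta> F L)"
  then obtain C v where "C \<in> classes \<delta> F" "v \<in> C" "u \<in> C" "v \<in> L"
    by (auto simp: gamma_star_def alpha_star_def)
  then have "aequiv \<delta> F v u" "Fin v \<in> lang \<delta> q0 F"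
    using classes_aequiv assms by blast+
  then have "Fin u \<in> lang \<delta> q0 F"
    by (rule lang_Fin_aequiv)
  then show "u \<in> {w. Fin w \<in> lang \<delta> q0 F}"
    by simp
qed

lemma ramsey_strict_mono:
  fixes g :: "nat \<Rightarrow> nat \<Rightarrow> 'b"
  assumes "finite B" "\<And>i j. i < j \<Longrightarrow> g i j \<in> B"
  obtains h :: "nat \<Rightarrow> nat" where "strict_mono h" "\<And>i j. i < j \<Longrightarrow> g (h i) (h j) = g (h 0) (h 1)"
proof -
  obtain e where e: "bij_betw e {0..<card B} B"
    using ex_bij_betw_nat_finite[OF assms(1)] by blast
  define f where "f X = inv_into {0..<card B} e (g (Min X) (Max X))" for X
  have g_eq: "g i j = e (f {i, j})" if "i < j" for i j
  proof -
    have "g i j \<in> e ` {0..<card B}"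
      using e assms(2)[OF that] by (simp add: bij_betw_def)
    then show ?thesis
      using that unfolding f_def by (simp add: f_inv_into_f)
  qed
  have "f {i, j} < card B" if "i \<noteq> j" for i j
  proof -
    have "Min {i, j} < Max {i, j}"
      using that by (simp add: min_def max_def)
    then have "g (Min {i, j}) (Max {i, j}) \<in> e ` {0..<card B}"
      using e assms(2) by (simp add: bij_betw_def)
    then show ?thesis
      unfolding f_def by (metis atLeastLessThan_iff inv_into_into)
  qed
  then obtain Y t where Y: "infinite Y" "\<forall>x\<in>Y. \<forall>y\<in>Y. x \<noteq> y \<longrightarrow> f {x, y} = t"
    using Ramsey2[of "UNIV :: nat set" f "card B"] by blast
  define h where "h = enumerate Y"
  have h: "strict_mono h"
    unfolding h_def strict_mono_def using enumerate_mono[OF _ Y(1)] by blast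
  have ht: "g (h i) (h j) = e t" if "i < j" for i j
  proof -
    have "h i < h j" using h that by (rule strict_monoD)
    moreover have "f {h i, h j} = t"
      using Y(2) enumerate_in_set[OF Y(1)] \<open>h i < h j\<close> unfolding h_def by simp
    ultimately show ?thesis
      using g_eq by simp
  qed
  show ?thesis
    by (rule that[OF h]) (simp add: ht)
qed

definition run_on :: "('q \<Rightarrow> 'a \<Rightarrow> 'q set) \<Rightarrow> (nat \<Rightarrow> 'q) \<Rightarrow> 'a list \<Rightarrow> bool" where
  "run_on \<delta> s w \<longleftrightarrow> (\<forall>i<length w. s (Suc i) \<in> \<delta> (s i) (w ! i))"

lemma run_on_Cons: "run_on \<delta> s (a # w) \<longleftrightarrow> s 1 \<in> \<delta> (s 0) a \<and> run_on \<delta> (\<lambda>i. s (Suc i)) w"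
  by (auto simp: run_on_def less_Suc_eq_0_disj)

lemma all_less_add_iff: "(\<forall>i<m + (n::nat). P i) \<longleftrightarrow> (\<forall>i<m. P i) \<and> (\<forall>i<n. P (m + i))"
proof
  assume h: "(\<forall>i<m. P i) \<and> (\<forall>i<n. P (m + i))"
  show "\<forall>i<m + n. P i"
  proof (intro allI impI)
    fix i assume "i < m + n"
    then show "P i"
      using h by (cases "i < m") (auto dest: spec[of _ "i - m"])
  qed
qed simp

lemma run_on_append:
  "run_on \<delta> s (u @ v) \<longleftrightarrow> run_on \<delta> s u \<and> run_on \<delta> (\<lambda>i. s (length u + i)) v"
  unfolding run_on_def length_append all_less_add_iff by (simp add: nth_append)

lemma reach_iff_run_on: "reach \<delta> p w q \<longleftrightarrow> (\<exists>s. s 0 = p \<and> s (length w) = q \<and> run_on \<delta> s w)"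
proof (induction w arbitrary: p)
  case Nil
  then show ?case by (auto simp: run_on_def)
next
  case (Cons a w)
  show ?case
  proof
    assume "reach \<delta> p (a # w) q"
    then obtain p' s where "p' \<in> \<delta> p a" "s 0 = p'" "s (length w) = q" "run_on \<delta> s w"
      using Cons.IH by auto
    then show "\<exists>s. s 0 = p \<and> s (length (a # w)) = q \<and> run_on \<delta> s (a # w)"
      by (intro exI[of _ "case_nat p s"]) (simp add: run_on_Cons)
  next
    assume "\<exists>s. s 0 = p \<and> s (length (a # w)) = q \<and> run_on \<delta> s (a # w)"
    then show "reach \<delta> p (a # w) q"
      using Cons.IH by (auto simp: run_on_Cons)
  qed
qed

lemma reachF_iff_run_on:
  "reachF \<delta> F p w q \<longleftrightarrow> (\<exists>s. s 0 = p \<and> s (length w) = q \<and> run_on \<delta> s w \<and> (\<exists>m\<le>length w. s m \<in> F))"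
proof
  assume "reachF \<delta> F p w q"
  then obtain f u v s t where f: "f \<in> F" and w: "w = u @ v"
    and s: "s 0 = p" "s (length u) = f" "run_on \<delta> s u"
    and t: "t 0 = f" "t (length v) = q" "run_on \<delta> t v"
    unfolding reachF_def reach_iff_run_on by blast
  define st where "st i = (if i \<le> length u then s i else t (i - length u))" for i
  have st_u: "run_on \<delta> st u"
    using s(3) by (simp add: st_def run_on_def)
  have st_v: "st (length u + i) = t i" for i
    using s(2) t(1) by (simp add: st_def)
  have "run_on \<delta> st w"
    unfolding w run_on_append st_v using st_u t(3) by simp
  moreover have "st 0 = p" "st (length w) = q" "st (length u) \<in> F" "length u \<le> length w"
    using s t f w st_v[of "length v"] by (simp_all add: st_def)
  ultimately show "\<exists>s. s 0 = p \<and> s (length w) = q \<and> run_on \<delta> s w \<and> (\<exists>m\<le>length w. s m \<in> F)"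
    by blast
next
  assume "\<exists>s. s 0 = p \<and> s (length w) = q \<and> run_on \<delta> s w \<and> (\<exists>m\<le>length w. s m \<in> F)"
  then obtain s m where s: "s 0 = p" "s (length w) = q" "run_on \<delta> s (take m w @ drop m w)"
    and m: "m \<le> length w" "s m \<in> F"
    by (metis append_take_drop_id)
  then have runs: "run_on \<delta> s (take m w)" "run_on \<delta> (\<lambda>i. s (m + i)) (drop m w)"
    using s(3) unfolding run_on_append by (simp_all add: min_absorb2)
  have "reach \<delta> p (take m w) (s m)"
    unfolding reach_iff_run_on using runs(1) s(1) m(1) by (auto simp: min_absorb2)
  moreover have "reach \<delta> (s m) (drop m w) q"
    unfolding reach_iff_run_on using runs(2) s(2) m(1)
    by (intro exI[of _ "\<lambda>i. s (m + i)"]) simp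
  ultimately show "reachF \<delta> F p w q"
    unfolding reachF_def using m(2) by (metis append_take_drop_id)
qed

lemma INFM_nat_shift: "(\<exists>\<^sub>\<infinity>i. P (k + i)) \<longleftrightarrow> (\<exists>\<^sub>\<infinity>i::nat. P i)"
  using eventually_sequentially_seg[of "\<lambda>i. \<not> P i" k]
  by (simp add: cofinite_eq_sequentially frequently_def add.commute)

lemma lang_wconc: "wconc (Fin u) x \<in> lang \<delta> q F \<longleftrightarrow> (\<exists>p. reach \<delta> q u p \<and> x \<in> lang \<delta> p F)"
proof (cases x)
  case (Fin v)
  then show ?thesis by (auto simp: lang_def reach_append)
next
  case (Inf v)
  define uv where "uv n = (if n < length u then u ! n else v (n - length u))" for n
  have uv_shift: "uv (length u + i) = v i" for i
    by (simp add: uv_def)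
  have x: "wconc (Fin u) x = Inf uv"
    using Inf by (simp add: uv_def fun_eq_iff)
  show ?thesis
  proof
    assume "wconc (Fin u) x \<in> lang \<delta> q F"
    then obtain r where r: "r 0 = q" "\<forall>i. r (Suc i) \<in> \<delta> (r i) (uv i)" "\<exists>\<^sub>\<infinity>i. r i \<in> F"
      by (auto simp: x lang_def)
    have "run_on \<delta> r u"
      unfolding run_on_def using r(2) uv_def by metis
    then have "reach \<delta> q u (r (length u))"
      unfolding reach_iff_run_on using r(1) by blast
    moreover have "Inf v \<in> lang \<delta> (r (length u)) F"
    proof -
      have "\<forall>i. r (Suc (length u + i)) \<in> \<delta> (r (length u + i)) (v i)"
        using r(2) uv_shift by (metis add_Suc_right)
      then show ?thesis
        using r(3) unfolding lang_def INFM_nat_shift[of "\<lambda>i. r i \<in> F" "length u", symmetric]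
        by (auto intro!: exI[of _ "\<lambda>i. r (length u + i)"])
    qed
    ultimately show "\<exists>p. reach \<delta> q u p \<and> x \<in> lang \<delta> p F"
      using Inf by blast
  next
    assume "\<exists>p. reach \<delta> q u p \<and> x \<in> lang \<delta> p F"
    then obtain s r where s: "s 0 = q" "run_on \<delta> s u"
      and r: "r 0 = s (length u)" "\<forall>i. r (Suc i) \<in> \<delta> (r i) (v i)" "\<exists>\<^sub>\<infinity>i. r i \<in> F"
      using Inf by (auto simp: reach_iff_run_on lang_def)
    define sr where "sr i = (if i \<le> length u then s i else r (i - length u))" for i
    have sr_shift: "sr (length u + i) = r i" for i
      using r(1) by (simp add: sr_def)
    have sr_run: "sr (Suc i) \<in> \<delta> (sr i) (uv i)" for i
    proof (cases "i < length u")
      case True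
      then show ?thesis using s(2) by (simp add: sr_def uv_def run_on_def)
    next
      case False
      then obtain k where "i = length u + k"
        using le_Suc_ex not_less by blast
      then show ?thesis using r(2) sr_shift[of k] sr_shift[of "Suc k"] uv_shift[of k] by simp
    qed
    moreover have "\<exists>\<^sub>\<infinity>i. sr i \<in> F"
      using r(3) sr_shift INFM_nat_shift[of "\<lambda>i. sr i \<in> F" "length u"] by simp
    moreover have "sr 0 = q"
      using s(1) by (simp add: sr_def)
    ultimately show "wconc (Fin u) x \<in> lang \<delta> q F"
      unfolding x lang_def by blast
  qed
qed

lemma strict_mono_Least_segment:
  fixes b :: "nat \<Rightarrow> nat"
  assumes "strict_mono b" "b k \<le> n" "n < b (Suc k)"
  shows "(LEAST k. n < b (Suc k)) = k"
proof (rule Least_equality)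
  show "n < b (Suc k)" by fact
next
  fix k' assume k': "n < b (Suc k')"
  show "k \<le> k'"
  proof (rule ccontr)
    assume "\<not> k \<le> k'"
    then have "b (Suc k') \<le> b k"
      using assms(1) by (simp add: strict_mono_less_eq)
    then show False
      using k' assms(2) by simp
  qed
qed

lemma strict_mono_segment:
  fixes b :: "nat \<Rightarrow> nat"
  assumes "strict_mono b" "b 0 \<le> n"
  obtains k where "b k \<le> n" "n < b (Suc k)"
proof -
  define k where "k = (LEAST k. n < b (Suc k))"
  have "n < b (Suc n)"
    using strict_mono_imp_increasing[OF assms(1), of "Suc n"] by simp
  then have "n < b (Suc k)"
    unfolding k_def by (rule LeastI)
  moreover have "b k \<le> n"
  proof (cases k)
    case (Suc k')
    then have "\<not> n < b (Suc k')"
      unfolding k_def by (metis lessI not_less_Least)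
    then show ?thesis using Suc by simp
  qed (simp add: assms(2))
  ultimately show ?thesis by (rule that[rotated])
qed

lemma prefix_len_0 [simp]: "prefix_len ws 0 = 0"
  by (simp add: prefix_len_def)

lemma prefix_len_Suc [simp]: "prefix_len ws (Suc k) = prefix_len ws k + length (ws k)"
  by (simp add: prefix_len_def)

lemma strict_mono_prefix_len: "(\<And>k. ws k \<noteq> []) \<Longrightarrow> strict_mono (prefix_len ws)"
  by (simp add: strict_mono_Suc_iff)

lemma infconcat_nonempty:
  assumes "\<And>k. ws k \<noteq> []"
  obtains W where "infconcat ws = Inf W" "\<And>k. ws k = map W [prefix_len ws k..<prefix_len ws (Suc k)]"
proof -
  let ?b = "prefix_len ws"
  define W where "W n = (let k = (LEAST k. n < ?b (Suc k)) in ws k ! (n - ?b k))" for n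
  have "\<not> (\<exists>N. \<forall>i\<ge>N. ws i = [])"
    using assms by blast
  then have "infconcat ws = Inf W"
    unfolding infconcat_def W_def[abs_def] by simp
  moreover have "ws k = map W [?b k..<?b (Suc k)]" for k
  proof (rule nth_equalityI)
    fix j assume "j < length (ws k)"
    then have "(LEAST k'. ?b k + j < ?b (Suc k')) = k"
      by (intro strict_mono_Least_segment[OF strict_mono_prefix_len[OF assms]]) simp_all
    then show "ws k ! j = map W [?b k..<?b (Suc k)] ! j"
      using \<open>j < length (ws k)\<close> by (simp add: W_def)
  qed simp
  ultimately show ?thesis by (rule that)
qed

lemma infconcat_segments:
  fixes b :: "nat \<Rightarrow> nat"
  assumes b: "strict_mono b"
  shows "infconcat (\<lambda>k. map w [b k..<b (Suc k)]) = Inf (\<lambda>n. w (b 0 + n))"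
proof -
  let ?ws = "\<lambda>k. map w [b k..<b (Suc k)]"
  have b_le: "b i \<le> b j" if "i \<le> j" for i j
    using b that by (simp add: strict_mono_less_eq)
  have ne: "?ws k \<noteq> []" for k
    using strict_monoD[OF b, of k "Suc k"] by simp
  obtain W where W: "infconcat ?ws = Inf W"
    and segs: "\<And>k. ?ws k = map W [prefix_len ?ws k..<prefix_len ?ws (Suc k)]"
    using infconcat_nonempty[of ?ws, OF ne] by blast
  have prefix_len_ws: "prefix_len ?ws k = b k - b 0" for k
    by (induction k) (use b_le[of 0] b_le[of _ "Suc _"] in auto)
  have "W n = w (b 0 + n)" for n
  proof -
    obtain k where k: "b k \<le> b 0 + n" "b 0 + n < b (Suc k)"
      using strict_mono_segment[OF b, of "b 0 + n"] by auto
    have "map W [b k - b 0..<b (Suc k) - b 0] ! (b 0 + n - b k) = W n"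
      using k b_le[of 0 k] by (simp add: nth_map_upt)
    moreover have "map w [b k..<b (Suc k)] ! (b 0 + n - b k) = w (b 0 + n)"
      using k by (simp add: nth_map_upt)
    ultimately show ?thesis
      using segs[of k] by (simp add: prefix_len_ws)
  qed
  with W show ?thesis by auto
qed

lemma omega_pow_Nil: "omega_pow {[]} = {Fin []}"
proof -
  have "infconcat (\<lambda>_. []) = Fin []"
    by (simp add: infconcat_def)
  moreover have "(\<forall>i. ws i \<in> {[]}) \<longleftrightarrow> ws = (\<lambda>_. [])" for ws :: "nat \<Rightarrow> 'a list"
    by auto
  ultimately show ?thesis
    by (auto simp: omega_pow_def)
qed

lemma strict_mono_glue:
  fixes b :: "nat \<Rightarrow> nat"
  assumes b: "strict_mono b" and match: "\<And>k. S (Suc k) 0 = S k (b (Suc k) - b k)"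
  obtains R where "\<And>k j. j \<le> b (Suc k) - b k \<Longrightarrow> R (b k + j) = S k j"
proof -
  define seg where "seg n = (LEAST k. n < b (Suc k))" for n
  define R where "R n = S (seg n) (n - b (seg n))" for n
  have "R (b k + j) = S k j" if j: "j \<le> b (Suc k) - b k" for k j
  proof (cases "j < b (Suc k) - b k")
    case True
    then have "seg (b k + j) = k"
      unfolding seg_def by (intro strict_mono_Least_segment[OF b]) simp_all
    then show ?thesis by (simp add: R_def)
  next
    case False
    have "b k < b (Suc k)" "b (Suc k) < b (Suc (Suc k))"
      using b by (simp_all add: strict_mono_Suc_iff)
    then have "b k + j = b (Suc k)" "seg (b (Suc k)) = Suc k"
      using False j unfolding seg_def
      by (simp_all add: strict_mono_Least_segment[OF b])
    then show ?thesis
      using match[of k] False j by (simp add: R_def)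
  qed
  then show ?thesis by (rule that)
qed

lemma run_on_map_upt:
  "(\<And>i. r (Suc i) \<in> \<delta> (r i) (W i)) \<Longrightarrow> run_on \<delta> (\<lambda>i. r (a + i)) (map W [a..<c])"
  by (simp add: run_on_def nth_map_upt)

lemma lang_Inf_segment_states:
  fixes b :: "nat \<Rightarrow> nat"
  assumes b: "strict_mono b" "b 0 = 0" and ws: "\<And>k. ws k = map W [b k..<b (Suc k)]"
    and "Inf W \<in> lang \<delta> q F"
  obtains p where "p 0 = q" "\<And>k. reach \<delta> (p k) (ws k) (p (Suc k))"
    "\<exists>\<^sub>\<infinity>k. reachF \<delta> F (p k) (ws k) (p (Suc k))"
proof -
  obtain r where r: "r 0 = q" "\<And>i. r (Suc i) \<in> \<delta> (r i) (W i)" "\<exists>\<^sub>\<infinity>i. r i \<in> F"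
    using assms(4) by (auto simp: lang_def)
  have b_le: "b k \<le> b (Suc k)" for k
    using b(1) by (simp add: strict_mono_less_eq)
  have seg_run: "run_on \<delta> (\<lambda>i. r (b k + i)) (ws k)" for k
    unfolding ws by (rule run_on_map_upt) (rule r(2))
  have seg_end: "b k + length (ws k) = b (Suc k)" for k
    using b_le[of k] by (simp add: ws)
  have "reach \<delta> (r (b k)) (ws k) (r (b (Suc k)))" for k
    unfolding reach_iff_run_on using seg_run[of k] seg_end[of k]
    by (intro exI[of _ "\<lambda>i. r (b k + i)"]) simp
  moreover have "\<exists>\<^sub>\<infinity>k. reachF \<delta> F (r (b k)) (ws k) (r (b (Suc k)))"
    unfolding INFM_nat
  proof
    fix N
    obtain i where i: "b (Suc N) < i" "r i \<in> F"
      using r(3) unfolding INFM_nat by blast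
    obtain k where k: "b k \<le> i" "i < b (Suc k)"
      by (rule strict_mono_segment[OF b(1)]) (auto simp: b(2))
    have "N < k"
    proof (rule ccontr)
      assume "\<not> N < k"
      then have "b (Suc k) \<le> b (Suc N)"
        using b(1) by (simp add: strict_mono_less_eq)
      then show False
        using i(1) k(2) by simp
    qed
    moreover have "reachF \<delta> F (r (b k)) (ws k) (r (b (Suc k)))"
      unfolding reachF_iff_run_on using seg_run[of k] seg_end[of k] i(2) k
      by (intro exI[of _ "\<lambda>i. r (b k + i)"]) (auto intro!: exI[of _ "i - b k"])
    ultimately show "\<exists>k>N. reachF \<delta> F (r (b k)) (ws k) (r (b (Suc k)))"
      by blast
  qed
  ultimately show ?thesis
    using that[of "\<lambda>k. r (b k)"] r(1) b(2) by simp
qed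

lemma segment_states_lang_Inf:
  fixes b :: "nat \<Rightarrow> nat"
  assumes b: "strict_mono b" "b 0 = 0" and ws: "\<And>k. ws k = map W [b k..<b (Suc k)]"
    and p: "p 0 = q" "\<And>k. reach \<delta> (p k) (ws k) (p (Suc k))"
    "\<exists>\<^sub>\<infinity>k. reachF \<delta> F (p k) (ws k) (p (Suc k))"
  shows "Inf W \<in> lang \<delta> q F"
proof -
  have len: "length (ws k) = b (Suc k) - b k" for k
    by (simp add: ws)
  have "\<exists>s. s 0 = p k \<and> s (length (ws k)) = p (Suc k) \<and> run_on \<delta> s (ws k)
      \<and> (reachF \<delta> F (p k) (ws k) (p (Suc k)) \<longrightarrow> (\<exists>m\<le>length (ws k). s m \<in> F))" for k
    using p(2)[of k] unfolding reach_iff_run_on reachF_iff_run_on by blast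
  then obtain S where S0: "\<And>k. S k 0 = p k" and S_end: "\<And>k. S k (length (ws k)) = p (Suc k)"
    and S_run: "\<And>k. run_on \<delta> (S k) (ws k)"
    and S_F: "\<And>k. reachF \<delta> F (p k) (ws k) (p (Suc k)) \<Longrightarrow> \<exists>m\<le>length (ws k). S k m \<in> F"
    by metis
  obtain R where R: "\<And>k j. j \<le> b (Suc k) - b k \<Longrightarrow> R (b k + j) = S k j"
    using strict_mono_glue[OF b(1), of S] S0 S_end len by metis
  have "R (Suc n) \<in> \<delta> (R n) (W n)" for n
  proof -
    obtain k where k: "b k \<le> n" "n < b (Suc k)"
      by (rule strict_mono_segment[OF b(1)]) (auto simp: b(2))
    define j where "j = n - b k"
    have j: "j < length (ws k)" "n = b k + j"
      using k by (simp_all add: len j_def)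
    have "S k (Suc j) \<in> \<delta> (S k j) (ws k ! j)"
      using S_run[of k] j(1) by (simp add: run_on_def)
    moreover have "ws k ! j = W n"
      using j by (simp add: ws nth_map_upt)
    ultimately show ?thesis
      using R[of j k] R[of "Suc j" k] j by (simp add: len)
  qed
  moreover have "R 0 = q"
    using R[of 0 0] S0[of 0] b(2) p(1) by simp
  moreover have "\<exists>\<^sub>\<infinity>n. R n \<in> F"
    unfolding INFM_nat
  proof
    fix N
    obtain k where k: "N < k" "reachF \<delta> F (p k) (ws k) (p (Suc k))"
      using p(3) unfolding INFM_nat by blast
    then obtain m where m: "m \<le> length (ws k)" "S k m \<in> F"
      using S_F by blast
    have "N < b k + m"
      using k(1) strict_mono_imp_increasing[OF b(1), of k] by simp
    moreover have "R (b k + m) \<in> F"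
      using R[of m k] m len by simp
    ultimately show "\<exists>n>N. R n \<in> F"
      by blast
  qed
  ultimately show ?thesis
    unfolding lang_def by blast
qed

lemma infconcat_lang_aequiv:
  assumes "\<And>k. xs k \<noteq> []" "\<And>k. ys k \<noteq> []" "\<And>k. aequiv \<delta> F (xs k) (ys k)"
    and "infconcat xs \<in> lang \<delta> q F"
  shows "infconcat ys \<in> lang \<delta> q F"
proof -
  obtain X where X: "infconcat xs = Inf X" "\<And>k. xs k = map X [prefix_len xs k..<prefix_len xs (Suc k)]"
    using infconcat_nonempty[of xs, OF assms(1)] by blast
  obtain Y where Y: "infconcat ys = Inf Y" "\<And>k. ys k = map Y [prefix_len ys k..<prefix_len ys (Suc k)]"
    using infconcat_nonempty[of ys, OF assms(2)] by blast
  obtain p where p: "p 0 = q" "\<And>k. reach \<delta> (p k) (xs k) (p (Suc k))"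
    "\<exists>\<^sub>\<infinity>k. reachF \<delta> F (p k) (xs k) (p (Suc k))"
    using lang_Inf_segment_states[where ws = xs and W = X and b = "prefix_len xs",
        OF strict_mono_prefix_len[of xs, OF assms(1)] prefix_len_0 X(2) assms(4)[unfolded X(1)]]
    by blast
  have "reach \<delta> (p k) (ys k) (p (Suc k))" for k
    using p(2)[of k] assms(3)[of k] by (simp add: aequiv_def)
  moreover have "\<exists>\<^sub>\<infinity>k. reachF \<delta> F (p k) (ys k) (p (Suc k))"
    using p(3) assms(3) by (simp add: aequiv_def)
  ultimately have "Inf Y \<in> lang \<delta> q F"
    using segment_states_lang_Inf[where ws = ys and W = Y and b = "prefix_len ys" and p = p,
        OF strict_mono_prefix_len[of ys, OF assms(2)] prefix_len_0 Y(2)] p(1)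
    by blast
  then show ?thesis
    by (simp add: Y(1))
qed

lemma map_upt_append: "a \<le> b \<Longrightarrow> b \<le> c \<Longrightarrow> map f [a..<b] @ map f [b..<c] = map f [a..<c]"
  using upt_add_eq_append[of a b "c - b"] by (simp flip: map_append)

lemma cdomega_Nil: "cdomega C {[]} = Fin ` C"
  unfolding cdomega_def omega_pow_Nil by auto

lemma cdomega_lang_saturated:
  assumes C: "C \<in> classes \<delta> F" and D: "D \<in> classes \<delta> F"
    and x: "x \<in> cdomega C D" "x \<in> lang \<delta> q F" and y: "y \<in> cdomega C D"
  shows "y \<in> lang \<delta> q F"
proof (cases "D = {[]}")
  case True
  then obtain c c' where c: "c \<in> C" "c' \<in> C" and "x = Fin c" "y = Fin c'"
    using x(1) y by (auto simp: cdomega_Nil)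
  moreover have "aequiv \<delta> F c c'"
    using classes_aequiv[OF C c] .
  ultimately show ?thesis
    using x(2) lang_Fin_aequiv by simp
next
  case False
  then have ne: "d \<noteq> []" if "d \<in> D" for d
    using classes_Nil_or_nonempty[OF D] that by blast
  obtain c ds where c: "c \<in> C" and ds: "\<And>k. ds k \<in> D" and x_eq: "x = wconc (Fin c) (infconcat ds)"
    using x(1) by (auto simp: cdomega_def omega_pow_def)
  obtain c' ds' where c': "c' \<in> C" and ds': "\<And>k. ds' k \<in> D" and y_eq: "y = wconc (Fin c') (infconcat ds')"
    using y by (auto simp: cdomega_def omega_pow_def)
  obtain p where p: "reach \<delta> q c p" "infconcat ds \<in> lang \<delta> p F"
    using x(2) unfolding x_eq lang_wconc by blast
  have "aequiv \<delta> F c c'"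
    using classes_aequiv[OF C c c'] .
  then have "reach \<delta> q c' p"
    using p(1) by (simp add: aequiv_def)
  moreover have "infconcat ds' \<in> lang \<delta> p F"
  proof (rule infconcat_lang_aequiv[OF _ _ _ p(2)])
    show "ds k \<noteq> []" "ds' k \<noteq> []" "aequiv \<delta> F (ds k) (ds' k)" for k
      using ne ds ds' classes_aequiv[OF D ds ds'] by blast+
  qed
  ultimately show ?thesis
    unfolding y_eq lang_wconc by blast
qed

lemma pairs_Nil: "(cls \<delta> F w, {[]}) \<in> pairs \<delta> F"
proof -
  have Nil: "{[]} \<in> classes \<delta> F"
    using cls_in_classes[of \<delta> F "[]"] by (simp add: cls_Nil)
  have "cmult \<delta> F (cls \<delta> F w) {[]} = cls \<delta> F (w @ [])"
    by (rule cmult_cls[OF cls_in_classes Nil cls_self]) simp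
  moreover have "cmult \<delta> F {[]} {[]} = cls \<delta> F ([] @ [])"
    by (rule cmult_cls[OF Nil Nil]) simp_all
  ultimately show ?thesis
    using Nil by (simp add: pairs_def cls_Nil)
qed

lemma ramsey_factorization:
  fixes \<delta> :: "'q::finite \<Rightarrow> 'a \<Rightarrow> 'q set"
  obtains h :: "nat \<Rightarrow> nat" where "strict_mono h"
    "\<And>i j. i < j \<Longrightarrow> cls \<delta> F (map w [h i..<h j]) = cls \<delta> F (map w [h 0..<h 1])"
proof (rule ramsey_strict_mono[OF finite_classes[of \<delta> F], of "\<lambda>i j. cls \<delta> F (map w [i..<j])"])
  show "cls \<delta> F (map w [i..<j]) \<in> classes \<delta> F" for i j
    by simp
qed (rule that)

lemma pairs_factorization:
  fixes h :: "nat \<Rightarrow> nat"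
  assumes h: "strict_mono h" and hom: "\<And>i j. i < j \<Longrightarrow> cls \<delta> F (map w [h i..<h j]) = D"
  defines "C \<equiv> cls \<delta> F (map w [0..<h 1])"
  shows "(C, D) \<in> pairs \<delta> F" and "Inf w \<in> cdomega C D"
proof -
  define seg where "seg i j = map w [h i..<h j]" for i j
  have seg_append: "seg i j @ seg j k = seg i k" if "i \<le> j" "j \<le> k" for i j k
    unfolding seg_def using that by (intro map_upt_append) (simp_all add: strict_mono_less_eq[OF h])
  have seg_D: "seg i j \<in> D" if "i < j" for i j
    unfolding seg_def using cls_self[of "map w [h i..<h j]" \<delta> F] hom[OF that] by simp
  have Ccl: "C \<in> classes \<delta> F" and Dcl: "D \<in> classes \<delta> F"
    unfolding C_def using hom[of 0 1] by (auto simp del: One_nat_def)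
  have "cmult \<delta> F D D = cls \<delta> F (seg 0 2)"
    using cmult_cls[OF Dcl Dcl seg_D seg_D, of 0 1 1 2] seg_append[of 0 1 2] by simp
  then have DD: "cmult \<delta> F D D = D"
    using hom[of 0 2] unfolding seg_def by simp
  have "map w [0..<h 1] @ seg 1 2 = map w [0..<h 0] @ seg 0 2"
    "map w [0..<h 0] @ seg 0 1 = map w [0..<h 1]"
    using h seg_append[of 0 1 2] unfolding seg_def
    by (simp_all add: map_upt_append strict_mono_less_eq flip: append_assoc)
  moreover have "cls \<delta> F (seg 0 2) = cls \<delta> F (seg 0 1)"
    using hom[of 0 2] hom[of 0 1] unfolding seg_def by simp
  ultimately have C_seg: "cls \<delta> F (map w [0..<h 1] @ seg 1 2) = C"
    unfolding C_def using cls_append_cong[OF refl, of \<delta> F "seg 0 2" "seg 0 1" "map w [0..<h 0]"]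
    by simp
  have c: "map w [0..<h 1] \<in> C"
    unfolding C_def by (rule cls_self)
  have CD: "cmult \<delta> F C D = C"
    using cmult_cls[OF Ccl Dcl c seg_D[of 1 2]] C_seg by simp
  show "(C, D) \<in> pairs \<delta> F"
    unfolding pairs_def using Ccl Dcl CD DD by simp
  have "strict_mono (\<lambda>k. h (Suc k))"
    using h by (simp add: strict_mono_Suc_iff)
  then have "infconcat (\<lambda>k. seg (Suc k) (Suc (Suc k))) = Inf (\<lambda>n. w (h 1 + n))"
    unfolding seg_def using infconcat_segments[of "\<lambda>k. h (Suc k)" w] by simp
  then have "Inf w = wconc (Fin (map w [0..<h 1])) (infconcat (\<lambda>k. seg (Suc k) (Suc (Suc k))))"
    by (auto simp: fun_eq_iff)
  moreover have "infconcat (\<lambda>k. seg (Suc k) (Suc (Suc k))) \<in> omega_pow D"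
    unfolding omega_pow_def using seg_D by blast
  ultimately show "Inf w \<in> cdomega C D"
    unfolding cdomega_def using c by blast
qed

lemma ex_pairs_cdomega:
  fixes \<delta> :: "'q::finite \<Rightarrow> 'a \<Rightarrow> 'q set"
  shows "\<exists>C D. (C, D) \<in> pairs \<delta> F \<and> x \<in> cdomega C D"
proof (cases x)
  case (Fin w)
  then have "x \<in> cdomega (cls \<delta> F w) {[]}"
    by (simp add: cdomega_Nil)
  then show ?thesis
    using pairs_Nil by blast
next
  case (Inf w)
  obtain h :: "nat \<Rightarrow> nat" where h: "strict_mono h"
    and hom: "\<And>i j. i < j \<Longrightarrow> cls \<delta> F (map w [h i..<h j]) = cls \<delta> F (map w [h 0..<h 1])"
    using ramsey_factorization[of \<delta> F w] by blast
  then show ?thesis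
    using pairs_factorization[OF h hom] Inf by blast
qed

lemma gg_mono: "VV \<subseteq> WW \<Longrightarrow> gg VV \<subseteq> gg WW"
  by (auto simp: gg_def)

lemma subset_gg_ff:
  fixes \<delta> :: "'q::finite \<Rightarrow> 'a \<Rightarrow> 'q set"
  shows "V \<subseteq> gg (ff \<delta> F V)"
proof
  fix x assume "x \<in> V"
  obtain C D where "(C, D) \<in> pairs \<delta> F" "x \<in> cdomega C D"
    using ex_pairs_cdomega by blast
  with \<open>x \<in> V\<close> have "(C, D) \<in> ff \<delta> F V" "x \<in> cdomega C D"
    by (auto simp: ff_def)
  then show "x \<in> gg (ff \<delta> F V)"
    by (auto simp: gg_def)
qed

lemma subset_gamma_alpha_omega:
  fixes \<delta> :: "'q::finite \<Rightarrow> 'a \<Rightarrow> 'q set"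
  shows "L \<subseteq> gamma_omega (alpha_omega \<delta> F L)"
proof -
  have "((ff \<delta> F \<circ> gg) ^^ 1) (ff \<delta> F L) \<subseteq> cl \<delta> F (ff \<delta> F L)"
    unfolding cl_def by (intro UN_upper) simp
  then have "gg (ff \<delta> F (gg (ff \<delta> F L))) \<subseteq> gamma_omega (alpha_omega \<delta> F L)"
    unfolding gamma_omega_def alpha_omega_def by (simp add: gg_mono)
  moreover have "L \<subseteq> gg (ff \<delta> F (gg (ff \<delta> F L)))"
    using subset_gg_ff[of L] subset_gg_ff[of "gg (ff \<delta> F L)"] by blast
  ultimately show ?thesis
    by blast
qed

lemma gg_ff_subset_lang:
  assumes "V \<subseteq> lang \<delta> q0 F"
  shows "gg (ff \<delta> F V) \<subseteq> lang \<delta> q0 F"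
proof
  fix y assume "y \<in> gg (ff \<delta> F V)"
  then obtain C D x where CD: "(C, D) \<in> pairs \<delta> F" and x: "x \<in> cdomega C D" "x \<in> V"
    and y: "y \<in> cdomega C D"
    by (auto simp: gg_def ff_def)
  from CD have C: "C \<in> classes \<delta> F" and D: "D \<in> classes \<delta> F"
    by (simp_all add: pairs_def)
  have "x \<in> lang \<delta> q0 F"
    using x(2) assms by blast
  then show "y \<in> lang \<delta> q0 F"
    using cdomega_lang_saturated[OF C D x(1) _ y] by blast
qed

lemma gamma_alpha_omega_subset_lang:
  assumes "L \<subseteq> lang \<delta> q0 F"
  shows "gamma_omega (alpha_omega \<delta> F L) \<subseteq> lang \<delta> q0 F"
proof -
  have "gg (((ff \<delta> F \<circ> gg) ^^ n) (ff \<delta> F L)) \<subseteq> lang \<delta> q0 F" for n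
    by (induction n) (simp_all add: gg_ff_subset_lang assms)
  then show ?thesis
    unfolding gamma_omega_def alpha_omega_def cl_def gg_def by blast
qed

lemma gamma_alpha_star_subset_lang_iff:
  "gamma_star (alpha_star \<delta> F L) \<subseteq> {w. Fin w \<in> lang \<delta> q0 F} \<longleftrightarrow> L \<subseteq> {w. Fin w \<in> lang \<delta> q0 F}"
proof
  assume "gamma_star (alpha_star \<delta> F L) \<subseteq> {w. Fin w \<in> lang \<delta> q0 F}"
  then show "L \<subseteq> {w. Fin w \<in> lang \<delta> q0 F}"
    using subset_gamma_alpha_star by blast
qed (rule gamma_alpha_star_subset_lang)

lemma gamma_alpha_omega_subset_lang_iff:
  fixes \<delta> :: "'q::finite \<Rightarrow> 'a \<Rightarrow> 'q set"
  shows "gamma_omega (alpha_omega \<delta> F L) \<subseteq> lang \<delta> q0 F \<longleftrightarrow> L \<subseteq> lang \<delta> q0 F"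
proof
  assume "gamma_omega (alpha_omega \<delta> F L) \<subseteq> lang \<delta> q0 F"
  then show "L \<subseteq> lang \<delta> q0 F"
    using subset_gamma_alpha_omega by blast
qed (rule gamma_alpha_omega_subset_lang)

theorem lemma9:
  fixes \<delta> :: "'q::finite \<Rightarrow> 'a::finite \<Rightarrow> 'q set" and q0 :: 'q and F :: "'q set"
  shows "(\<forall>L :: 'a list set.
            gamma_star (alpha_star \<delta> F L) \<subseteq> {w. Fin w \<in> lang \<delta> q0 F}
            \<longleftrightarrow> L \<subseteq> {w. Fin w \<in> lang \<delta> q0 F})
       \<and> (\<forall>L :: 'a xword set.
            gamma_omega (alpha_omega \<delta> F L) \<subseteq> lang \<delta> q0 F
            \<longleftrightarrow> L \<subseteq> lang \<delta> q0 F)"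
  by (simp add: gamma_alpha_star_subset_lang_iff gamma_alpha_omega_subset_lang_iff)

end
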